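(* Let $\mathcal{U}$ be a set and $\mathcal{L}=\{\ell_1,\dots,\ell_q\}$, $q\in\mathbb{N}$, a finite label set; let $F:\mathcal{U}\to\mathcal{L}$ (the classifier) and $\Phi:\mathcal{U}\to\mathbb{R}^d$ (the feature map) be measurable maps. Let $P_D$ be an (unknown) probability distribution on $\mathcal{U}\times\mathcal{L}$ and let $\mathcal{S}=\{(u_i,y_i)\}_{i=1}^M$ be a finite multi-set whose elements are sampled independently from $P_D$, with $F$ and $\Phi$ chosen independently of $\mathcal{S}$. For $j=1,\dots,q$ let $\mathcal{S}_j=\{(u,y)\in\mathcal{S}\mid F(u)=\ell_j\}$, $\mathcal{S}_{+,j}=\{(u,y)\in\mathcal{S}_j\mid y=\ell_j\}$, $\mathcal{S}_{-,j}=\{(u,y)\in\mathcal{S}_j\mid y\neq\ell_j\}$, with $M_{+,j}=|\mathcal{S}_{+,j}|$, $M_{-,j}=|\mathcal{S}_{-,j}|$, and suppose $\mathcal{S}_{+,j}$ and $\mathcal{S}_{-,j}$ are nonempty for every $j$. Let $\mathcal{H}$ be a class of measurable functions $\mathbb{R}^d\to\mathbb{R}$ and, for each $j$, let $h_j\in\mathcal{H}$ be selected independently of $\mathcal{S}$. Define the empirical distribution functions \[F_{+,j}(s)=\frac{1}{M_{+,j}}\sum_{(u,y)\in\mathcal{S}_{+,j}}\mathbf{1}_{h_j(\Phi(u))\le s},\qquad F_{-,j}(s)=\frac{1}{M_{-,j}}\sum_{(u,y)\in\mathcal{S}_{-,j}}\mathbf{1}_{h_j(\Phi(u))\le s},\]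 and let $\Delta_j\in(0,1)$, $j=1,\dots,q$. Let $\ell^{\times}\notin\mathcal{L}$ be an extra label, and define the corrector $\mathcal{A}:\mathcal{L}\times\mathbb{R}^d\to\mathcal{L}\cup\{\ell^{\times}\}$ by $\mathcal{A}(\ell_j,z)=\ell^{\times}$ if $h_j(z)\le F_{-,j}^{\dagger}(\Delta_j)$ and $\mathcal{A}(\ell_j,z)=\ell_j$ otherwise. Define $\rho,\psi:[0,1]\times\mathbb{N}\to\mathbb{R}$ by \[\rho(a,d)=\sup_{\varepsilon\in(0,1]}\max\{a-\varepsilon,0\}\bigl(1-2\exp(-2d\varepsilon^2)\bigr),\qquad \psi(a,d)=\inf_{\varepsilon\in(0,1]}\Bigl(2\exp(-2d\varepsilon^2)+\min\{1,a+\varepsilon\}\Bigr).\] Then for a new independent sample $(u,\ell)\sim P_D$ and each $j=1,\dots,q$, \[P\bigl(\mathcal{A}(F(u),\Phi(u))=\ell_j\mid F(u)=\ell_j,\ \ell=\ell_j\bigr)\ge 1-\psi\bigl(F_{+,j}(F_{-,j}^{\dagger}(\Delta_j)),M_{+,j}\bigr),\] and \[P\bigl(\mathcal{A}(F(u),\Phi(u))=\ell^{\times}\mid F(u)=\ell_j,\ \ell\neq\ell_j\bigr)\ge \rho(\Delta_j,M_{-,j}).\]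
   Context: For a monotone function $f:X\to Y$ between intervals of $\mathbb{R}$ (here $f=F_{-,j}$ on $\mathbb{R}$), the pseudo-inverse is $f^{\dagger}(y)=\inf\{x\in X\mid f(x)\ge y\}$. $\mathbf{1}_{A}$ denotes the indicator of the event/set $A$. The label $\ell^{\times}$ represents the corrector rejecting the classifier's decision. *)

theory Defs
  imports "HOL-Probability.Probability"
begin

definition Splus :: "('u \<Rightarrow> 'l) \<Rightarrow> nat \<Rightarrow> 'l \<Rightarrow> (nat \<Rightarrow> 'u \<times> 'l) \<Rightarrow> nat set" where
  "Splus F M l S = {i \<in> {..<M}. F (fst (S i)) = l \<and> snd (S i) = l}"

definition Sminus :: "('u \<Rightarrow> 'l) \<Rightarrow> nat \<Rightarrow> 'l \<Rightarrow> (nat \<Rightarrow> 'u \<times> 'l) \<Rightarrow> nat set" where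
  "Sminus F M l S = {i \<in> {..<M}. F (fst (S i)) = l \<and> snd (S i) \<noteq> l}"

definition ecdf :: "('u \<Rightarrow> real) \<Rightarrow> nat set \<Rightarrow> (nat \<Rightarrow> 'u \<times> 'l) \<Rightarrow> real \<Rightarrow> real" where
  "ecdf g I S s = (\<Sum>i\<in>I. indicator {..s} (g (fst (S i)))) / real (card I)"

definition pseudo_inv :: "(real \<Rightarrow> real) \<Rightarrow> real \<Rightarrow> real" where
  "pseudo_inv f y = Inf {x. f x \<ge> y}"

definition thr :: "('u \<Rightarrow> 'l) \<Rightarrow> ('u \<Rightarrow> 'z) \<Rightarrow> ('l \<Rightarrow> 'z \<Rightarrow> real) \<Rightarrow> ('l \<Rightarrow> real)
                   \<Rightarrow> nat \<Rightarrow> 'l \<Rightarrow> (nat \<Rightarrow> 'u \<times> 'l) \<Rightarrow> real" where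
  "thr F \<Phi> h \<Delta> M l S = pseudo_inv (ecdf (\<lambda>u. h l (\<Phi> u)) (Sminus F M l S) S) (\<Delta> l)"

definition corrector :: "'l \<Rightarrow> ('u \<Rightarrow> 'l) \<Rightarrow> ('u \<Rightarrow> 'z) \<Rightarrow> ('l \<Rightarrow> 'z \<Rightarrow> real) \<Rightarrow> ('l \<Rightarrow> real)
                   \<Rightarrow> nat \<Rightarrow> (nat \<Rightarrow> 'u \<times> 'l) \<Rightarrow> 'l \<Rightarrow> 'z \<Rightarrow> 'l" where
  "corrector lx F \<Phi> h \<Delta> M S l z = (if h l z \<le> thr F \<Phi> h \<Delta> M l S then lx else l)"

definition rho :: "real \<Rightarrow> nat \<Rightarrow> real" where
  "rho a d = (SUP \<epsilon>\<in>{0<..1}. max (a - \<epsilon>) 0 * (1 - 2 * exp (- 2 * real d * \<epsilon>^2)))"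

definition psi :: "real \<Rightarrow> nat \<Rightarrow> real" where
  "psi a d = (INF \<epsilon>\<in>{0<..1}. 2 * exp (- 2 * real d * \<epsilon>^2) + min 1 (a + \<epsilon>))"

end

theory Submission
  imports Defs
begin

text \<open>
  The M sample points and the new point are i.i.d., so exchanging the new point with the i-th
  sample point preserves the joint law. For a positive new point (F u = y = l), averaging this
  over the positive sample points shows that its rejection probability is the expectation of
  F_{+}(F_{-}^dagger(Delta)), and 1 - psi(a, d) <= 1 - a. For a negative new point, look at the
  n + 1 negatives of the augmented sample: at least Delta n of them have fewer than Delta n other
  negatives strictly below them, which for the new point means precisely that the threshold
  built from the n sample negatives rejects it. Averaging over the n + 1 positions bounds its
  rejection probability below by the expectation of Delta n / (n + 1) >= rho(Delta, n).
\<close>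

lemma measurable_fun_upd_last:
  "(\<lambda>(S, x). S(M := x)) \<in> (\<Pi>\<^sub>M i\<in>{..<M}. N) \<Otimes>\<^sub>M N \<rightarrow>\<^sub>M (\<Pi>\<^sub>M i\<in>{..<Suc M}. N)"
proof -
  have "(\<lambda>p. (fst p)(M := snd p)) \<in> (\<Pi>\<^sub>M i\<in>{..<M}. N) \<Otimes>\<^sub>M N \<rightarrow>\<^sub>M (\<Pi>\<^sub>M i\<in>insert M {..<M}. N)"
    by measurable
  then show ?thesis
    by (simp add: case_prod_unfold lessThan_Suc)
qed

lemma distr_PiM_fun_upd_last:
  assumes PD: "prob_space PD"
  shows "distr ((\<Pi>\<^sub>M i\<in>{..<M}. PD) \<Otimes>\<^sub>M PD) (\<Pi>\<^sub>M i\<in>{..<Suc M}. PD) (\<lambda>(S, x). S(M := x))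
       = (\<Pi>\<^sub>M i\<in>{..<Suc M}. PD)"
proof -
  interpret pair_sigma_finite PD "\<Pi>\<^sub>M i\<in>{..<M}. PD"
    using PD by (intro pair_sigma_finite.intro prob_space_imp_sigma_finite prob_space_PiM)
  have "distr ((\<Pi>\<^sub>M i\<in>{..<M}. PD) \<Otimes>\<^sub>M PD) (\<Pi>\<^sub>M i\<in>{..<Suc M}. PD) (\<lambda>(S, x). S(M := x))
      = distr (PD \<Otimes>\<^sub>M (\<Pi>\<^sub>M i\<in>{..<M}. PD)) (\<Pi>\<^sub>M i\<in>insert M {..<M}. PD) (\<lambda>(x, S). S(M := x))"
    by (subst distr_pair_swap) (simp add: distr_distr measurable_pair_swap' comp_def case_prod_unfold lessThan_Suc)
  also have "\<dots> = (\<Pi>\<^sub>M i\<in>{..<Suc M}. PD)"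
    using distr_pair_PiM_eq_PiM[of "{..<M}" "\<lambda>_. PD" M] PD by (simp add: lessThan_Suc)
  finally show ?thesis .
qed

lemma distr_PiM_split_last:
  assumes PD: "prob_space PD"
  shows "distr (\<Pi>\<^sub>M i\<in>{..<Suc M}. PD) ((\<Pi>\<^sub>M i\<in>{..<M}. PD) \<Otimes>\<^sub>M PD) (\<lambda>\<omega>. (restrict \<omega> {..<M}, \<omega> M))
       = (\<Pi>\<^sub>M i\<in>{..<M}. PD) \<Otimes>\<^sub>M PD"
  (is "distr ?Q ?P ?split = ?P")
proof -
  have split: "?split \<in> ?Q \<rightarrow>\<^sub>M ?P"
    by measurable
  have "distr ?Q ?P ?split = distr ?P ?P (?split \<circ> (\<lambda>(S, x). S(M := x)))"
    by (subst distr_PiM_fun_upd_last[OF PD, symmetric]) (simp add: distr_distr split measurable_fun_upd_last)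
  also have "\<dots> = distr ?P ?P (\<lambda>\<omega>. \<omega>)"
    by (intro distr_cong) (auto simp: space_pair_measure space_PiM PiE_def extensional_def fun_eq_iff)
  finally show ?thesis
    by simp
qed

lemma measurable_swap_component:
  fixes M :: nat
  assumes j: "j < M"
  shows "(\<lambda>(S, x). (S(j := x), S j)) \<in> (\<Pi>\<^sub>M i\<in>{..<M}. N) \<Otimes>\<^sub>M N \<rightarrow>\<^sub>M (\<Pi>\<^sub>M i\<in>{..<M}. N) \<Otimes>\<^sub>M N"
proof -
  have "(\<lambda>p. (fst p)(j := snd p)) \<in> (\<Pi>\<^sub>M i\<in>{..<M}. N) \<Otimes>\<^sub>M N \<rightarrow>\<^sub>M (\<Pi>\<^sub>M i\<in>{..<M}. N)"
    using j by (intro measurable_fun_upd[where J="{..<M}"]) auto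
  moreover have "(\<lambda>p. fst p j) \<in> (\<Pi>\<^sub>M i\<in>{..<M}. N) \<Otimes>\<^sub>M N \<rightarrow>\<^sub>M N"
    using j by (intro measurable_compose[OF measurable_fst measurable_component_singleton]) auto
  ultimately show ?thesis
    by (simp add: case_prod_unfold measurable_Pair)
qed

lemma distr_swap_component:
  fixes M :: nat
  assumes PD: "prob_space PD" and j: "j < M"
  shows "distr ((\<Pi>\<^sub>M i\<in>{..<M}. PD) \<Otimes>\<^sub>M PD) ((\<Pi>\<^sub>M i\<in>{..<M}. PD) \<Otimes>\<^sub>M PD) (\<lambda>(S, x). (S(j := x), S j))
       = (\<Pi>\<^sub>M i\<in>{..<M}. PD) \<Otimes>\<^sub>M PD"
  (is "distr ?P ?P ?swap = ?P")
proof -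
  let ?Q = "\<Pi>\<^sub>M i\<in>{..<Suc M}. PD"
  define \<tau> where "\<tau> n = (if n = j then M else if n = M then j else n)" for n
  have \<tau>: "inj_on \<tau> {..<Suc M}" "\<tau> \<in> {..<Suc M} \<rightarrow> {..<Suc M}"
    using j by (auto simp: \<tau>_def inj_on_def)
  let ?permute = "\<lambda>\<omega>. \<lambda>n\<in>{..<Suc M}. \<omega> (\<tau> n)"
  have permute: "?permute \<in> ?Q \<rightarrow>\<^sub>M ?Q" and distr_permute: "distr ?Q ?Q ?permute = ?Q"
    using \<tau> distr_PiM_reindex[of "{..<Suc M}" "\<lambda>_. PD" \<tau> "{..<Suc M}"] PD
    by (auto intro!: measurable_restrict measurable_component_singleton)
  let ?split = "\<lambda>\<omega>. (restrict \<omega> {..<M}, \<omega> M)"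
  have split: "?split \<in> ?Q \<rightarrow>\<^sub>M ?P"
    by measurable
  txt \<open>On the (M + 1)-fold product the swap is just the transposition of the coordinates j and M.\<close>
  have "distr ?P ?P ?swap = distr ?P ?P (?split \<circ> ?permute \<circ> (\<lambda>(S, x). S(M := x)))"
  proof (rule distr_cong)
    fix \<omega> assume "\<omega> \<in> space ?P"
    then obtain S x where \<omega>: "\<omega> = (S, x)" and S: "S \<in> extensional {..<M}"
      by (auto simp: space_pair_measure space_PiM PiE_def)
    show "?swap \<omega> = (?split \<circ> ?permute \<circ> (\<lambda>(S, x). S(M := x))) \<omega>"
      using S j by (auto simp: \<omega> \<tau>_def extensional_def fun_eq_iff)
  qed simp_all
  also have "\<dots> = distr (distr (distr ?P ?Q (\<lambda>(S, x). S(M := x))) ?Q ?permute) ?P ?split"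
    using measurable_comp[OF measurable_fun_upd_last permute]
    by (simp add: distr_distr split permute measurable_fun_upd_last comp_assoc)
  also have "\<dots> = ?P"
    by (simp add: distr_PiM_fun_upd_last[OF PD] distr_permute distr_PiM_split_last[OF PD])
  finally show ?thesis .
qed

lemma integral_swap_component:
  fixes M :: nat and f :: "((nat \<Rightarrow> 'a) \<times> 'a) \<Rightarrow> real"
  assumes PD: "prob_space PD" and j: "j < M"
    and f: "f \<in> borel_measurable ((\<Pi>\<^sub>M i\<in>{..<M}. PD) \<Otimes>\<^sub>M PD)"
  shows "(\<integral>\<omega>. f ((fst \<omega>)(j := snd \<omega>), fst \<omega> j) \<partial>((\<Pi>\<^sub>M i\<in>{..<M}. PD) \<Otimes>\<^sub>M PD))
       = (\<integral>\<omega>. f \<omega> \<partial>((\<Pi>\<^sub>M i\<in>{..<M}. PD) \<Otimes>\<^sub>M PD))"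
  using integral_distr[OF measurable_swap_component[OF j] f] distr_swap_component[OF PD j]
  by (simp add: case_prod_unfold)

lemma ex_count_le_below_iff:
  fixes w :: "'a \<Rightarrow> real"
  assumes N: "finite N" and c: "0 < c"
  shows "(\<exists>x<t. c \<le> real (card {i\<in>N. w i \<le> x})) \<longleftrightarrow> c \<le> real (card {i\<in>N. w i < t})"
proof
  assume "\<exists>x<t. c \<le> real (card {i\<in>N. w i \<le> x})"
  then obtain x where "x < t" "c \<le> real (card {i\<in>N. w i \<le> x})"
    by blast
  moreover have "card {i\<in>N. w i \<le> x} \<le> card {i\<in>N. w i < t}"
    using N \<open>x < t\<close> by (intro card_mono) auto
  ultimately show "c \<le> real (card {i\<in>N. w i < t})"
    by linarith
next
  let ?B = "{i\<in>N. w i < t}"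
  assume B: "c \<le> real (card ?B)"
  have "?B \<noteq> {}"
  proof
    assume "?B = {}"
    with B c show False
      by simp
  qed
  then have "Max (w ` ?B) \<in> w ` ?B"
    using N by (intro Max_in) auto
  moreover have "card ?B \<le> card {i\<in>N. w i \<le> Max (w ` ?B)}"
    using N by (intro card_mono) auto
  ultimately show "\<exists>x<t. c \<le> real (card {i\<in>N. w i \<le> x})"
    using B by (intro exI[of _ "Max (w ` ?B)"]) auto
qed

lemma le_Inf_count_le_iff:
  fixes w :: "'a \<Rightarrow> real"
  assumes N: "finite N" and c: "0 < c" "c \<le> real (card N)"
  shows "t \<le> Inf {x. c \<le> real (card {i\<in>N. w i \<le> x})} \<longleftrightarrow> real (card {i\<in>N. w i < t}) < c"
proof -
  define T where "T = {x. c \<le> real (card {i\<in>N. w i \<le> x})}"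
  have "{i\<in>N. w i \<le> Max (w ` N)} = N"
    using N by auto
  with c have "Max (w ` N) \<in> T"
    by (simp add: T_def)
  moreover have "bdd_below T"
  proof (rule bdd_belowI)
    fix x assume "x \<in> T"
    have "{i\<in>N. w i \<le> x} \<noteq> {}"
    proof
      assume "{i\<in>N. w i \<le> x} = {}"
      with \<open>x \<in> T\<close> c show False
        by (simp add: T_def)
    qed
    then obtain i where "i \<in> N" "w i \<le> x"
      by auto
    then show "Min (w ` N) \<le> x"
      using N by (meson Min_le finite_imageI image_eqI order_trans)
  qed
  ultimately have "t \<le> Inf T \<longleftrightarrow> \<not> (\<exists>x<t. x \<in> T)"
    by (subst le_cInf_iff) (auto simp: not_less)
  also have "\<dots> \<longleftrightarrow> real (card {i\<in>N. w i < t}) < c"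
    using ex_count_le_below_iff[OF N c(1)] by (auto simp: T_def not_le)
  finally show ?thesis
    by (simp add: T_def)
qed

lemma ecdf_eq_card:
  assumes "finite N"
  shows "ecdf g N S x = real (card {i\<in>N. g (fst (S i)) \<le> x}) / real (card N)"
  using assms by (simp add: ecdf_def indicator_def Int_def)

lemma le_pseudo_inv_ecdf_iff:
  assumes N: "finite N" "N \<noteq> {}" and \<delta>: "0 < \<delta>" "\<delta> \<le> 1"
  shows "t \<le> pseudo_inv (ecdf g N S) \<delta> \<longleftrightarrow> real (card {i\<in>N. g (fst (S i)) < t}) < \<delta> * real (card N)"
proof -
  have card_N: "0 < real (card N)"
    using N by (simp add: card_gt_0_iff)
  have "{x. \<delta> \<le> ecdf g N S x} = {x. \<delta> * real (card N) \<le> real (card {i\<in>N. g (fst (S i)) \<le> x})}"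
    using card_N by (simp add: ecdf_eq_card[OF N(1)] pos_le_divide_eq)
  moreover have "0 < \<delta> * real (card N)" "\<delta> * real (card N) \<le> real (card N)"
    using \<delta> card_N by (simp_all add: mult_left_le_one_le)
  ultimately show ?thesis
    unfolding pseudo_inv_def by (simp add: le_Inf_count_le_iff[OF N(1)])
qed

lemma card_rank_less_ge:
  fixes V :: "'a \<Rightarrow> 'b::linorder"
  assumes N: "finite N" and c: "c \<le> real (card N)"
  shows "c \<le> real (card {j\<in>N. real (card {i\<in>N. V i < V j}) < c})"
proof (cases "\<forall>j\<in>N. real (card {i\<in>N. V i < V j}) < c")
  case True
  then show ?thesis
    using c by (simp add: Collect_conj_eq Int_absorb2 subset_iff)
next
  case False
  let ?A = "{j\<in>N. c \<le> real (card {i\<in>N. V i < V j})}"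
  have "finite ?A" "?A \<noteq> {}"
    using N False by auto
  then have "Min (V ` ?A) \<in> V ` ?A"
    by (intro Min_in) auto
  then obtain j0 where j0: "j0 \<in> ?A" "V j0 = Min (V ` ?A)"
    by (metis (no_types, lifting) imageE)
  with \<open>finite ?A\<close> have min: "\<And>j. j \<in> ?A \<Longrightarrow> V j0 \<le> V j"
    by simp
  have "{i\<in>N. V i < V j0} \<subseteq> {j\<in>N. real (card {i\<in>N. V i < V j}) < c}"
    using min by force
  then have "card {i\<in>N. V i < V j0} \<le> card {j\<in>N. real (card {i\<in>N. V i < V j}) < c}"
    using N by (intro card_mono) auto
  with j0 show ?thesis
    by simp
qed

lemma psi_ge:
  assumes "a \<le> 1"
  shows "a \<le> psi a d"
  unfolding psi_def
proof (rule cINF_greatest)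
  fix e :: real assume "e \<in> {0<..1}"
  then have "a \<le> min 1 (a + e)"
    using assms by simp
  moreover have "0 \<le> 2 * exp (- 2 * real d * e\<^sup>2)"
    by simp
  ultimately show "a \<le> 2 * exp (- 2 * real d * e\<^sup>2) + min 1 (a + e)"
    by linarith
qed simp

lemma one_le_two_exp_neg:
  assumes "0 \<le> e" "e * (real m + 1) \<le> 1"
  shows "1 \<le> 2 * exp (- 2 * real m * e\<^sup>2)"
proof -
  have "4 * real m \<le> (real m + 1)\<^sup>2"
    using zero_le_power2[of "real m - 1"] by (simp add: power2_eq_square algebra_simps)
  then have "e\<^sup>2 * (4 * real m) \<le> e\<^sup>2 * (real m + 1)\<^sup>2"
    by (rule mult_left_mono) simp
  then have "4 * real m * e\<^sup>2 \<le> (e * (real m + 1))\<^sup>2"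
    by (simp add: power_mult_distrib mult.commute)
  also have "\<dots> \<le> 1"
    using assms by (simp add: power_le_one)
  finally have "1 - 2 * real m * e\<^sup>2 \<ge> 1 / 2"
    by simp
  then show ?thesis
    using exp_ge_add_one_self[of "- 2 * real m * e\<^sup>2"] by linarith
qed

lemma rho_le:
  assumes \<Delta>: "0 \<le> \<Delta>" "\<Delta> \<le> 1"
  shows "rho \<Delta> m \<le> \<Delta> * real m / (real m + 1)"
  unfolding rho_def
proof (rule cSUP_least)
  fix e :: real assume e: "e \<in> {0<..1}"
  have bound: "\<Delta> * real m / (real m + 1) = \<Delta> - \<Delta> / (real m + 1)"
    by (simp add: field_simps)
  have bound_nonneg: "0 \<le> \<Delta> * real m / (real m + 1)"
    using \<Delta> by simp
  show "max (\<Delta> - e) 0 * (1 - 2 * exp (- 2 * real m * e\<^sup>2)) \<le> \<Delta> * real m / (real m + 1)"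
  proof (cases "e * (real m + 1) \<le> \<Delta>")
    case True
    then have "1 - 2 * exp (- 2 * real m * e\<^sup>2) \<le> 0"
      using one_le_two_exp_neg[of e m] e \<Delta> by simp
    then have "max (\<Delta> - e) 0 * (1 - 2 * exp (- 2 * real m * e\<^sup>2)) \<le> 0"
      by (intro mult_nonneg_nonpos) auto
    then show ?thesis
      using bound_nonneg by linarith
  next
    case False
    then have "\<Delta> / (real m + 1) < e"
      by (simp add: divide_less_eq mult.commute)
    then have "max (\<Delta> - e) 0 \<le> \<Delta> * real m / (real m + 1)"
      using bound bound_nonneg by simp
    moreover have "max (\<Delta> - e) 0 * (1 - 2 * exp (- 2 * real m * e\<^sup>2)) \<le> max (\<Delta> - e) 0"
      by (intro mult_left_le) auto
    ultimately show ?thesis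
      by linarith
  qed
qed simp

lemma sum_fun_upd:
  fixes f :: "'a \<Rightarrow> 'b::ab_group_add"
  assumes "finite A" "i \<in> A"
  shows "(\<Sum>j\<in>A. f ((S(i := x)) j)) = (\<Sum>j\<in>A. f (S j)) - f (S i) + f x"
proof -
  have "(\<Sum>j\<in>A - {i}. f ((S(i := x)) j)) = (\<Sum>j\<in>A - {i}. f (S j))"
    by (intro sum.cong) auto
  then show ?thesis
    using assms by (simp add: sum.remove[of A i])
qed

locale corrector_setting =
  fixes MU :: "'u measure" and PD :: "('u \<times> 'l) measure" and L :: "'l set"
    and F :: "'u \<Rightarrow> 'l" and g :: "'u \<Rightarrow> real" and M :: nat and l :: 'l and \<delta> :: real
  assumes PD_prob: "prob_space PD"
    and PD_sets: "sets PD = sets (MU \<Otimes>\<^sub>M count_space L)"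
    and F_meas: "F \<in> MU \<rightarrow>\<^sub>M count_space L"
    and g_meas: "g \<in> borel_measurable MU"
    and finite_L: "finite L" and l_in_L: "l \<in> L" and \<delta>: "0 < \<delta>" "\<delta> \<le> 1"
begin

abbreviation "PS \<equiv> \<Pi>\<^sub>M i\<in>{..<M}. PD"
abbreviation "P \<equiv> PS \<Otimes>\<^sub>M PD"

definition is_plus :: "'u \<times> 'l \<Rightarrow> bool" where
  "is_plus x \<longleftrightarrow> F (fst x) = l \<and> snd x = l"

definition is_minus :: "'u \<times> 'l \<Rightarrow> bool" where
  "is_minus x \<longleftrightarrow> F (fst x) = l \<and> snd x \<noteq> l"

definition admissible :: "(nat \<Rightarrow> 'u \<times> 'l) \<Rightarrow> bool" where
  "admissible S \<longleftrightarrow> (\<forall>k\<in>L. Splus F M k S \<noteq> {} \<and> Sminus F M k S \<noteq> {})"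

definition n_plus :: "(nat \<Rightarrow> 'u \<times> 'l) \<Rightarrow> real" where
  "n_plus S = (\<Sum>i<M. of_bool (is_plus (S i)))"

definition n_minus :: "(nat \<Rightarrow> 'u \<times> 'l) \<Rightarrow> real" where
  "n_minus S = (\<Sum>i<M. of_bool (is_minus (S i)))"

definition minus_below :: "(nat \<Rightarrow> 'u \<times> 'l) \<Rightarrow> real \<Rightarrow> real" where
  "minus_below S t = (\<Sum>i<M. of_bool (is_minus (S i) \<and> g (fst (S i)) < t))"

text \<open>By le_threshold_iff_rejects, rejects S t says t \<le> F_{-}^dagger(\<delta>) for an admissible
  sample S; the count form makes it evidently measurable and easy to update when one sample
  point is replaced.\<close>

definition rejects :: "(nat \<Rightarrow> 'u \<times> 'l) \<Rightarrow> real \<Rightarrow> bool" where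
  "rejects S t \<longleftrightarrow> minus_below S t < \<delta> * n_minus S"

definition plus_reject_rate :: "(nat \<Rightarrow> 'u \<times> 'l) \<Rightarrow> real" where
  "plus_reject_rate S = (\<Sum>i<M. of_bool (is_plus (S i) \<and> rejects S (g (fst (S i))))) / n_plus S"

lemma measurable_PD_iff: "PD \<rightarrow>\<^sub>M N = MU \<Otimes>\<^sub>M count_space L \<rightarrow>\<^sub>M N"
  by (rule measurable_cong_sets[OF PD_sets refl])

lemma pred_label_eq: "Measurable.pred PD (\<lambda>x. f x = k)" if "f \<in> PD \<rightarrow>\<^sub>M count_space L"
proof -
  have "{x \<in> space PD. f x = k} = f -` ({k} \<inter> L) \<inter> space PD"
    using measurable_space[OF that] by auto
  then show ?thesis
    using measurable_sets[OF that, of "{k} \<inter> L"] by (simp add: Measurable.pred_def)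
qed

lemma pred_F_fst_eq[measurable]: "Measurable.pred PD (\<lambda>x. F (fst x) = k)"
  by (rule pred_label_eq) (use F_meas in \<open>simp add: measurable_PD_iff\<close>)

lemma pred_snd_eq[measurable]: "Measurable.pred PD (\<lambda>x. snd x = k)"
  by (rule pred_label_eq) (simp add: measurable_PD_iff)

lemma measurable_score[measurable]: "(\<lambda>x. g (fst x)) \<in> borel_measurable PD"
  using g_meas by (simp add: measurable_PD_iff)

lemma pred_is_plus[measurable]: "Measurable.pred PD is_plus"
  unfolding is_plus_def[abs_def] by measurable

lemma pred_is_minus[measurable]: "Measurable.pred PD is_minus"
  unfolding is_minus_def[abs_def] by measurable

lemma measurable_sample_component[measurable]:
  "i < M \<Longrightarrow> X \<in> N \<rightarrow>\<^sub>M PS \<Longrightarrow> (\<lambda>\<omega>. X \<omega> i) \<in> N \<rightarrow>\<^sub>M PD"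
  by (rule measurable_compose[OF _ measurable_component_singleton]) auto

lemma pred_admissible[measurable]: "Measurable.pred PS admissible"
proof -
  have "admissible = (\<lambda>S. \<forall>k\<in>L. (\<exists>i\<in>{..<M}. F (fst (S i)) = k \<and> snd (S i) = k)
                              \<and> (\<exists>i\<in>{..<M}. F (fst (S i)) = k \<and> snd (S i) \<noteq> k))"
    by (auto simp: fun_eq_iff admissible_def Splus_def Sminus_def)
  also have "Measurable.pred PS \<dots>"
    using finite_L by measurable
  finally show ?thesis .
qed

lemma measurable_n_plus[measurable]: "n_plus \<in> borel_measurable PS"
  unfolding n_plus_def by measurable

lemma measurable_n_minus[measurable]: "n_minus \<in> borel_measurable PS"
  unfolding n_minus_def by measurable

lemma measurable_minus_below[measurable]:
  assumes [measurable]: "X \<in> N \<rightarrow>\<^sub>M PS" "t \<in> borel_measurable N"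
  shows "(\<lambda>\<omega>. minus_below (X \<omega>) (t \<omega>)) \<in> borel_measurable N"
  unfolding minus_below_def by measurable

lemma pred_rejects[measurable]:
  assumes [measurable]: "X \<in> N \<rightarrow>\<^sub>M PS" "t \<in> borel_measurable N"
  shows "Measurable.pred N (\<lambda>\<omega>. rejects (X \<omega>) (t \<omega>))"
  unfolding rejects_def by measurable

lemma measurable_plus_reject_rate[measurable]: "plus_reject_rate \<in> borel_measurable PS"
  unfolding plus_reject_rate_def by measurable

definition "plus_event = {\<omega> \<in> space P. admissible (fst \<omega>) \<and> is_plus (snd \<omega>)}"
definition "minus_event = {\<omega> \<in> space P. admissible (fst \<omega>) \<and> is_minus (snd \<omega>)}"
definition "reject_event = {\<omega> \<in> space P. rejects (fst \<omega>) (g (fst (snd \<omega>)))}"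

lemma plus_event_sets[measurable]: "plus_event \<in> sets P"
  unfolding plus_event_def by measurable

lemma minus_event_sets[measurable]: "minus_event \<in> sets P"
  unfolding minus_event_def by measurable

lemma reject_event_sets[measurable]: "reject_event \<in> sets P"
  unfolding reject_event_def by measurable

sublocale P: prob_space P
  using PD_prob by (intro prob_space_pair prob_space_PiM)

lemma integrable_bounded_by_1:
  "f \<in> borel_measurable P \<Longrightarrow> (\<And>\<omega>. \<omega> \<in> space P \<Longrightarrow> \<bar>f \<omega>\<bar> \<le> (1::real)) \<Longrightarrow> integrable P f"
  by (intro P.integrable_const_bound[where B=1] AE_I2) auto

lemma card_Splus: "real (card (Splus F M l S)) = n_plus S"
  by (simp add: Splus_def n_plus_def is_plus_def Int_def)

lemma card_Sminus: "real (card (Sminus F M l S)) = n_minus S"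
  by (simp add: Sminus_def n_minus_def is_minus_def Int_def)

lemma n_minus_nonneg: "0 \<le> n_minus S"
  by (simp add: n_minus_def sum_nonneg)

lemma n_minus_plus_1_pos: "0 < n_minus S + 1"
  using n_minus_nonneg[of S] by linarith

lemma n_plus_ge_1:
  assumes "admissible S"
  shows "1 \<le> n_plus S"
proof -
  have "Splus F M l S \<noteq> {}" "finite (Splus F M l S)"
    using assms l_in_L by (auto simp: admissible_def Splus_def)
  then show ?thesis
    by (simp flip: card_Splus add: Suc_le_eq card_gt_0_iff)
qed

lemma le_threshold_iff_rejects:
  assumes "admissible S"
  shows "t \<le> pseudo_inv (ecdf g (Sminus F M l S) S) \<delta> \<longleftrightarrow> rejects S t"
proof -
  have "Sminus F M l S \<noteq> {}" "finite (Sminus F M l S)"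
    using assms l_in_L by (auto simp: admissible_def Sminus_def)
  moreover have "real (card {i \<in> Sminus F M l S. g (fst (S i)) < t}) = minus_below S t"
    by (simp add: Sminus_def minus_below_def is_minus_def Int_def conj_assoc)
  ultimately show ?thesis
    using \<delta> by (simp add: le_pseudo_inv_ecdf_iff card_Sminus rejects_def)
qed

lemma ecdf_Splus_threshold:
  assumes "admissible S"
  shows "ecdf g (Splus F M l S) S (pseudo_inv (ecdf g (Sminus F M l S) S) \<delta>) = plus_reject_rate S"
proof -
  have "{i \<in> Splus F M l S. g (fst (S i)) \<le> pseudo_inv (ecdf g (Sminus F M l S) S) \<delta>}
      = {..<M} \<inter> {i. is_plus (S i) \<and> rejects S (g (fst (S i)))}"
    by (auto simp: Splus_def is_plus_def le_threshold_iff_rejects[OF assms])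
  moreover have "finite (Splus F M l S)"
    by (simp add: Splus_def)
  ultimately show ?thesis
    by (simp add: ecdf_eq_card card_Splus plus_reject_rate_def)
qed

lemma plus_reject_rate_bounds: "0 \<le> plus_reject_rate S" "plus_reject_rate S \<le> 1"
proof -
  have "(\<Sum>i<M. of_bool (is_plus (S i) \<and> rejects S (g (fst (S i))))) \<le> n_plus S"
    unfolding n_plus_def by (intro sum_mono) auto
  then show "0 \<le> plus_reject_rate S" "plus_reject_rate S \<le> 1"
    by (auto simp: plus_reject_rate_def n_plus_def sum_nonneg divide_le_eq_1)
qed

lemma counts_fun_upd_same_class:
  assumes "i < M" "is_plus x = is_plus (S i)" "is_minus x = is_minus (S i)"
  shows "n_plus (S(i := x)) = n_plus S" "n_minus (S(i := x)) = n_minus S"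
  using assms unfolding n_plus_def n_minus_def
  by (subst sum_fun_upd[where f="\<lambda>y. of_bool (is_plus y)"] sum_fun_upd[where f="\<lambda>y. of_bool (is_minus y)"]; simp)+

lemma minus_below_fun_upd:
  "i < M \<Longrightarrow> minus_below (S(i := x)) t
     = minus_below S t - of_bool (is_minus (S i) \<and> g (fst (S i)) < t) + of_bool (is_minus x \<and> g (fst x) < t)"
  unfolding minus_below_def by (rule sum_fun_upd) auto

lemma admissible_fun_upd:
  assumes "i < M" "is_plus x \<and> is_plus (S i) \<or> is_minus x \<and> is_minus (S i)"
  shows "admissible (S(i := x)) = admissible S"
proof -
  have "Splus F M k (S(i := x)) = Splus F M k S" "Sminus F M k (S(i := x)) = Sminus F M k S" for k
    using assms by (auto simp: Splus_def Sminus_def is_plus_def is_minus_def)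
  then show ?thesis
    by (simp add: admissible_def)
qed

lemma fun_upd_plus_invariants:
  assumes "i < M" "is_plus x" "is_plus (S i)"
  shows "admissible (S(i := x)) = admissible S" "n_plus (S(i := x)) = n_plus S"
    "rejects (S(i := x)) = rejects S"
proof -
  have "\<not> is_minus x" "\<not> is_minus (S i)"
    using assms by (auto simp: is_plus_def is_minus_def)
  then show "admissible (S(i := x)) = admissible S" "n_plus (S(i := x)) = n_plus S"
    "rejects (S(i := x)) = rejects S"
    using assms
    by (simp_all add: admissible_fun_upd counts_fun_upd_same_class minus_below_fun_upd rejects_def fun_eq_iff)
qed

lemma fun_upd_minus_invariants:
  assumes "i < M" "is_minus x" "is_minus (S i)"
  shows "admissible (S(i := x)) = admissible S" "n_minus (S(i := x)) = n_minus S"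
proof -
  have "\<not> is_plus x" "\<not> is_plus (S i)"
    using assms by (auto simp: is_plus_def is_minus_def)
  then show "admissible (S(i := x)) = admissible S" "n_minus (S(i := x)) = n_minus S"
    using assms by (simp_all add: admissible_fun_upd counts_fun_upd_same_class)
qed

lemma integral_sum_swap:
  fixes f h :: "nat \<Rightarrow> (nat \<Rightarrow> 'u \<times> 'l) \<times> 'u \<times> 'l \<Rightarrow> real"
  assumes f: "\<And>i. i < M \<Longrightarrow> f i \<in> borel_measurable P"
    and f_bound: "\<And>i \<omega>. i < M \<Longrightarrow> \<omega> \<in> space P \<Longrightarrow> \<bar>f i \<omega>\<bar> \<le> 1"
    and h: "\<And>i. i < M \<Longrightarrow> h i \<in> borel_measurable P"
    and swap: "\<And>i \<omega>. i < M \<Longrightarrow> \<omega> \<in> space P \<Longrightarrow> f i ((fst \<omega>)(i := snd \<omega>), fst \<omega> i) = h i \<omega>"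
  shows "(\<integral>\<omega>. (\<Sum>i<M. f i \<omega>) \<partial>P) = (\<integral>\<omega>. (\<Sum>i<M. h i \<omega>) \<partial>P)"
proof -
  have swap_space: "((fst \<omega>)(i := snd \<omega>), fst \<omega> i) \<in> space P" if "i < M" "\<omega> \<in> space P" for i \<omega>
    using measurable_space[OF measurable_swap_component[OF that(1)] that(2)] by (simp add: case_prod_unfold)
  have "integrable P (f i)" if "i < M" for i
    using that f f_bound by (intro integrable_bounded_by_1) auto
  moreover have "integrable P (h i)" if "i < M" for i
  proof (rule integrable_bounded_by_1[OF h[OF that]])
    fix \<omega> assume "\<omega> \<in> space P"
    then show "\<bar>h i \<omega>\<bar> \<le> 1"
      using f_bound[OF that swap_space[OF that]] swap[OF that] by simp
  qed
  moreover have "integral\<^sup>L P (h i) = integral\<^sup>L P (f i)" if "i < M" for i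
  proof -
    have "integral\<^sup>L P (h i) = (\<integral>\<omega>. f i ((fst \<omega>)(i := snd \<omega>), fst \<omega> i) \<partial>P)"
      using swap[OF that] by (intro Bochner_Integration.integral_cong) simp_all
    also have "\<dots> = integral\<^sup>L P (f i)"
      by (rule integral_swap_component[OF PD_prob that f[OF that]])
    finally show ?thesis .
  qed
  ultimately show ?thesis
    by (simp add: Bochner_Integration.integral_sum)
qed

definition plus_weight :: "(nat \<Rightarrow> 'u \<times> 'l) \<Rightarrow> 'u \<times> 'l \<Rightarrow> real" where
  "plus_weight S x = of_bool (admissible S \<and> is_plus x) / n_plus S"

lemma measurable_plus_weight[measurable]: "(\<lambda>\<omega>. plus_weight (fst \<omega>) (snd \<omega>)) \<in> borel_measurable P"
  unfolding plus_weight_def by measurable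

lemma plus_weight_bounds: "0 \<le> plus_weight S x" "plus_weight S x \<le> 1"
  using n_plus_ge_1[of S] by (auto simp: plus_weight_def)

lemma integral_plus_swap:
  "(\<integral>\<omega>. (\<Sum>i<M. plus_weight (fst \<omega>) (snd \<omega>) * of_bool (is_plus (fst \<omega> i) \<and> rejects (fst \<omega>) (g (fst (fst \<omega> i))))) \<partial>P)
   = (\<integral>\<omega>. plus_weight (fst \<omega>) (snd \<omega>) * of_bool (rejects (fst \<omega>) (g (fst (snd \<omega>)))) * n_plus (fst \<omega>) \<partial>P)"
proof -
  let ?w = "\<lambda>\<omega>. plus_weight (fst \<omega>) (snd \<omega>) * of_bool (rejects (fst \<omega>) (g (fst (snd \<omega>))))"
  have "(\<integral>\<omega>. (\<Sum>i<M. plus_weight (fst \<omega>) (snd \<omega>) * of_bool (is_plus (fst \<omega> i) \<and> rejects (fst \<omega>) (g (fst (fst \<omega> i))))) \<partial>P)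
      = (\<integral>\<omega>. (\<Sum>i<M. ?w \<omega> * of_bool (is_plus (fst \<omega> i))) \<partial>P)"
  proof (rule integral_sum_swap, goal_cases)
    case (1 i)
    then show ?case
      by measurable
  next
    case (2 i \<omega>)
    then show ?case
      using plus_weight_bounds[of "fst \<omega>" "snd \<omega>"] by simp
  next
    case (3 i)
    then show ?case
      by measurable
  next
    case (4 i \<omega>)
    then show ?case
      using fun_upd_plus_invariants[of i "snd \<omega>" "fst \<omega>"]
      by (cases "is_plus (fst \<omega> i) \<and> is_plus (snd \<omega>)") (auto simp: plus_weight_def)
  qed
  also have "\<dots> = (\<integral>\<omega>. ?w \<omega> * n_plus (fst \<omega>) \<partial>P)"
    by (simp only: n_plus_def sum_distrib_left)
  finally show ?thesis .
qed

lemma integral_plus_reject_rate: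
  "(\<integral>\<omega>. indicator plus_event \<omega> * plus_reject_rate (fst \<omega>) \<partial>P) = measure P (plus_event \<inter> reject_event)"
proof -
  let ?w = "\<lambda>\<omega>. plus_weight (fst \<omega>) (snd \<omega>)"
  have "(\<integral>\<omega>. indicator plus_event \<omega> * plus_reject_rate (fst \<omega>) \<partial>P)
      = (\<integral>\<omega>. (\<Sum>i<M. ?w \<omega> * of_bool (is_plus (fst \<omega> i) \<and> rejects (fst \<omega>) (g (fst (fst \<omega> i))))) \<partial>P)"
  proof (intro Bochner_Integration.integral_cong refl)
    fix \<omega> assume "\<omega> \<in> space P"
    moreover have "(\<Sum>i<M. ?w \<omega> * of_bool (is_plus (fst \<omega> i) \<and> rejects (fst \<omega>) (g (fst (fst \<omega> i)))))
        = ?w \<omega> * (\<Sum>i<M. of_bool (is_plus (fst \<omega> i) \<and> rejects (fst \<omega>) (g (fst (fst \<omega> i)))))"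
      by (simp only: sum_distrib_left)
    ultimately show "indicator plus_event \<omega> * plus_reject_rate (fst \<omega>)
        = (\<Sum>i<M. ?w \<omega> * of_bool (is_plus (fst \<omega> i) \<and> rejects (fst \<omega>) (g (fst (fst \<omega> i)))))"
      by (simp add: plus_weight_def plus_event_def plus_reject_rate_def indicator_def)
  qed
  also have "\<dots> = (\<integral>\<omega>. ?w \<omega> * of_bool (rejects (fst \<omega>) (g (fst (snd \<omega>)))) * n_plus (fst \<omega>) \<partial>P)"
    by (rule integral_plus_swap)
  also have "\<dots> = (\<integral>\<omega>. indicator (plus_event \<inter> reject_event) \<omega> \<partial>P)"
  proof (intro Bochner_Integration.integral_cong refl)
    fix \<omega> assume "\<omega> \<in> space P"
    then show "?w \<omega> * of_bool (rejects (fst \<omega>) (g (fst (snd \<omega>)))) * n_plus (fst \<omega>)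
        = indicator (plus_event \<inter> reject_event) \<omega>"
      using n_plus_ge_1[of "fst \<omega>"] by (auto simp: plus_weight_def plus_event_def reject_event_def indicator_def)
  qed
  also have "\<dots> = measure P (plus_event \<inter> reject_event)"
    by (simp add: sets.Int_space_eq2)
  finally show ?thesis .
qed

text \<open>For a negative x, low_rank_count S x is the number of negatives of the augmented sample
  S(M := x) having fewer than \<delta> * n_minus S other negatives strictly below them: low_rank S x j
  expresses this for the sample point j, and rejects S (g (fst x)) for x itself.\<close>

definition low_rank :: "(nat \<Rightarrow> 'u \<times> 'l) \<Rightarrow> 'u \<times> 'l \<Rightarrow> nat \<Rightarrow> bool" where
  "low_rank S x j \<longleftrightarrow> minus_below S (g (fst (S j))) + of_bool (g (fst x) < g (fst (S j))) < \<delta> * n_minus S"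

definition low_rank_count :: "(nat \<Rightarrow> 'u \<times> 'l) \<Rightarrow> 'u \<times> 'l \<Rightarrow> real" where
  "low_rank_count S x = (\<Sum>j<M. of_bool (is_minus (S j) \<and> low_rank S x j)) + of_bool (rejects S (g (fst x)))"

definition minus_weight :: "(nat \<Rightarrow> 'u \<times> 'l) \<Rightarrow> 'u \<times> 'l \<Rightarrow> real" where
  "minus_weight S x = of_bool (admissible S \<and> is_minus x) / (n_minus S + 1)"

lemma pred_low_rank[measurable]: "j < M \<Longrightarrow> Measurable.pred P (\<lambda>\<omega>. low_rank (fst \<omega>) (snd \<omega>) j)"
  unfolding low_rank_def by measurable

lemma measurable_low_rank_count[measurable]: "(\<lambda>\<omega>. low_rank_count (fst \<omega>) (snd \<omega>)) \<in> borel_measurable P"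
  unfolding low_rank_count_def by measurable

lemma measurable_minus_weight[measurable]: "(\<lambda>\<omega>. minus_weight (fst \<omega>) (snd \<omega>)) \<in> borel_measurable P"
  unfolding minus_weight_def by measurable

lemma minus_weight_bounds: "0 \<le> minus_weight S x" "minus_weight S x \<le> 1"
  using n_minus_nonneg[of S] by (auto simp: minus_weight_def)

lemma low_rank_count_bounds: "0 \<le> low_rank_count S x" "low_rank_count S x \<le> n_minus S + 1"
proof -
  have "(\<Sum>j<M. of_bool (is_minus (S j) \<and> low_rank S x j)) \<le> n_minus S"
    unfolding n_minus_def by (intro sum_mono) simp
  then show "0 \<le> low_rank_count S x" "low_rank_count S x \<le> n_minus S + 1"
    by (auto simp: low_rank_count_def sum_nonneg)
qed

lemma low_rank_count_ge:
  assumes x: "is_minus x"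
  shows "\<delta> * n_minus S \<le> low_rank_count S x"
proof -
  define Z where "Z = S(M := x)"
  define N where "N = {i\<in>{..<Suc M}. is_minus (Z i)}"
  have card_N_filter: "real (card {i\<in>N. Q (Z i)}) = (\<Sum>i<M. of_bool (is_minus (S i) \<and> Q (S i))) + of_bool (Q x)"
    for Q
  proof -
    have "{i\<in>N. Q (Z i)} = {..<Suc M} \<inter> {i. is_minus (Z i) \<and> Q (Z i)}"
      by (auto simp: N_def)
    moreover have "(\<Sum>i<M. of_bool (is_minus (Z i) \<and> Q (Z i))) = (\<Sum>i<M. of_bool (is_minus (S i) \<and> Q (S i)) :: real)"
      by (intro sum.cong) (auto simp: Z_def)
    ultimately show ?thesis
      using x by (simp del: sum_of_bool_eq add: sum_of_bool_eq[symmetric] Z_def)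
  qed
  have count_below: "real (card {i\<in>N. g (fst (Z i)) < t}) = minus_below S t + of_bool (g (fst x) < t)" for t
    using card_N_filter[of "\<lambda>z. g (fst z) < t"] by (simp add: minus_below_def)
  have "real (card N) = n_minus S + 1"
    using card_N_filter[of "\<lambda>_. True"] by (simp add: n_minus_def)
  moreover have "\<delta> * n_minus S \<le> n_minus S"
    using \<delta> n_minus_nonneg[of S] by (simp add: mult_left_le_one_le)
  ultimately have "\<delta> * n_minus S \<le> real (card {j\<in>N. real (card {i\<in>N. g (fst (Z i)) < g (fst (Z j))}) < \<delta> * n_minus S})"
    by (intro card_rank_less_ge) (simp_all add: N_def)
  also have "\<dots> = real (card {j\<in>N. minus_below S (g (fst (Z j))) + of_bool (g (fst x) < g (fst (Z j))) < \<delta> * n_minus S})"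
    by (simp only: count_below)
  also have "\<dots> = low_rank_count S x"
    by (simp only: card_N_filter[of "\<lambda>z. minus_below S (g (fst z)) + of_bool (g (fst x) < g (fst z)) < \<delta> * n_minus S"])
      (simp add: low_rank_count_def low_rank_def rejects_def)
  finally show ?thesis .
qed

lemma low_rank_fun_upd:
  assumes "i < M" "is_minus x" "is_minus (S i)"
  shows "low_rank (S(i := x)) (S i) i \<longleftrightarrow> rejects S (g (fst x))"
proof -
  have "minus_below (S(i := x)) (g (fst x)) + of_bool (g (fst (S i)) < g (fst x)) = minus_below S (g (fst x))"
    using assms by (simp add: minus_below_fun_upd)
  then show ?thesis
    using fun_upd_minus_invariants[of i x S] assms by (simp add: low_rank_def rejects_def)
qed

lemma integral_low_rank_swap:
  "(\<integral>\<omega>. (\<Sum>j<M. minus_weight (fst \<omega>) (snd \<omega>) * of_bool (is_minus (fst \<omega> j) \<and> low_rank (fst \<omega>) (snd \<omega>) j)) \<partial>P)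
   = (\<integral>\<omega>. minus_weight (fst \<omega>) (snd \<omega>) * of_bool (rejects (fst \<omega>) (g (fst (snd \<omega>)))) * n_minus (fst \<omega>) \<partial>P)"
proof -
  let ?w = "\<lambda>\<omega>. minus_weight (fst \<omega>) (snd \<omega>) * of_bool (rejects (fst \<omega>) (g (fst (snd \<omega>))))"
  have "(\<integral>\<omega>. (\<Sum>j<M. minus_weight (fst \<omega>) (snd \<omega>) * of_bool (is_minus (fst \<omega> j) \<and> low_rank (fst \<omega>) (snd \<omega>) j)) \<partial>P)
      = (\<integral>\<omega>. (\<Sum>j<M. ?w \<omega> * of_bool (is_minus (fst \<omega> j))) \<partial>P)"
  proof (rule integral_sum_swap, goal_cases)
    case (1 j)
    then show ?case
      by measurable
  next
    case (2 j \<omega>)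
    then show ?case
      using minus_weight_bounds[of "fst \<omega>" "snd \<omega>"] by simp
  next
    case (3 j)
    then show ?case
      by measurable
  next
    case (4 j \<omega>)
    then show ?case
      using fun_upd_minus_invariants[of j "snd \<omega>" "fst \<omega>"] low_rank_fun_upd[of j "snd \<omega>" "fst \<omega>"]
      by (cases "is_minus (fst \<omega> j) \<and> is_minus (snd \<omega>)") (auto simp: minus_weight_def)
  qed
  also have "\<dots> = (\<integral>\<omega>. ?w \<omega> * n_minus (fst \<omega>) \<partial>P)"
    by (simp only: n_minus_def sum_distrib_left)
  finally show ?thesis .
qed

lemma integral_low_rank_count:
  "(\<integral>\<omega>. minus_weight (fst \<omega>) (snd \<omega>) * low_rank_count (fst \<omega>) (snd \<omega>) \<partial>P) = measure P (minus_event \<inter> reject_event)"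
proof -
  let ?w = "\<lambda>\<omega>. minus_weight (fst \<omega>) (snd \<omega>)"
  let ?r = "\<lambda>\<omega>. of_bool (rejects (fst \<omega>) (g (fst (snd \<omega>)))) :: real"
  have integrable: "integrable P (\<lambda>\<omega>. \<Sum>j<M. ?w \<omega> * of_bool (is_minus (fst \<omega> j) \<and> low_rank (fst \<omega>) (snd \<omega>) j))"
    "integrable P (\<lambda>\<omega>. ?w \<omega> * ?r \<omega> * n_minus (fst \<omega>))" "integrable P (\<lambda>\<omega>. ?w \<omega> * ?r \<omega>)"
    using minus_weight_bounds n_minus_nonneg
    by (auto intro!: Bochner_Integration.integrable_sum integrable_bounded_by_1
        simp: minus_weight_def divide_le_eq_1 n_minus_plus_1_pos)
  have "(\<integral>\<omega>. ?w \<omega> * low_rank_count (fst \<omega>) (snd \<omega>) \<partial>P)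
      = (\<integral>\<omega>. (\<Sum>j<M. ?w \<omega> * of_bool (is_minus (fst \<omega> j) \<and> low_rank (fst \<omega>) (snd \<omega>) j)) + ?w \<omega> * ?r \<omega> \<partial>P)"
    by (simp only: low_rank_count_def distrib_left sum_distrib_left)
  also have "\<dots> = (\<integral>\<omega>. (\<Sum>j<M. ?w \<omega> * of_bool (is_minus (fst \<omega> j) \<and> low_rank (fst \<omega>) (snd \<omega>) j)) \<partial>P)
      + (\<integral>\<omega>. ?w \<omega> * ?r \<omega> \<partial>P)"
    by (rule Bochner_Integration.integral_add[OF integrable(1,3)])
  also have "\<dots> = (\<integral>\<omega>. ?w \<omega> * ?r \<omega> * n_minus (fst \<omega>) \<partial>P) + (\<integral>\<omega>. ?w \<omega> * ?r \<omega> \<partial>P)"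
    by (simp only: integral_low_rank_swap)
  also have "\<dots> = (\<integral>\<omega>. ?w \<omega> * ?r \<omega> * n_minus (fst \<omega>) + ?w \<omega> * ?r \<omega> \<partial>P)"
    by (rule Bochner_Integration.integral_add[OF integrable(2,3), symmetric])
  also have "\<dots> = (\<integral>\<omega>. indicator (minus_event \<inter> reject_event) \<omega> \<partial>P)"
  proof (intro Bochner_Integration.integral_cong refl)
    fix \<omega> assume "\<omega> \<in> space P"
    have "?w \<omega> * ?r \<omega> * n_minus (fst \<omega>) + ?w \<omega> * ?r \<omega> = ?w \<omega> * (n_minus (fst \<omega>) + 1) * ?r \<omega>"
      by (simp add: algebra_simps)
    also have "?w \<omega> * (n_minus (fst \<omega>) + 1) = of_bool (admissible (fst \<omega>) \<and> is_minus (snd \<omega>))"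
      using n_minus_plus_1_pos[of "fst \<omega>"] by (simp add: minus_weight_def)
    finally show "?w \<omega> * ?r \<omega> * n_minus (fst \<omega>) + ?w \<omega> * ?r \<omega> = indicator (minus_event \<inter> reject_event) \<omega>"
      using \<open>\<omega> \<in> space P\<close> by (simp add: minus_event_def reject_event_def indicator_def)
  qed
  also have "\<dots> = measure P (minus_event \<inter> reject_event)"
    by (simp add: sets.Int_space_eq2)
  finally show ?thesis .
qed

lemma integrable_minus_ratio:
  "integrable P (\<lambda>\<omega>. indicator minus_event \<omega> * (\<delta> * n_minus (fst \<omega>) / (n_minus (fst \<omega>) + 1)))"
proof (rule integrable_bounded_by_1)
  fix \<omega> :: "(nat \<Rightarrow> 'u \<times> 'l) \<times> 'u \<times> 'l"
  have "\<delta> * n_minus (fst \<omega>) \<le> n_minus (fst \<omega>) + 1"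
    using \<delta> n_minus_nonneg[of "fst \<omega>"] mult_left_le_one_le[of "n_minus (fst \<omega>)" \<delta>] by simp
  then show "\<bar>indicator minus_event \<omega> * (\<delta> * n_minus (fst \<omega>) / (n_minus (fst \<omega>) + 1))\<bar> \<le> 1"
    using \<delta> n_minus_nonneg[of "fst \<omega>"] by (simp add: indicator_def n_minus_plus_1_pos)
qed measurable

lemma integral_minus_reject_ge:
  "(\<integral>\<omega>. indicator minus_event \<omega> * (\<delta> * n_minus (fst \<omega>) / (n_minus (fst \<omega>) + 1)) \<partial>P)
     \<le> measure P (minus_event \<inter> reject_event)"
proof -
  have "(\<integral>\<omega>. indicator minus_event \<omega> * (\<delta> * n_minus (fst \<omega>) / (n_minus (fst \<omega>) + 1)) \<partial>P)
      \<le> (\<integral>\<omega>. minus_weight (fst \<omega>) (snd \<omega>) * low_rank_count (fst \<omega>) (snd \<omega>) \<partial>P)"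
  proof (rule integral_mono)
    show "integrable P (\<lambda>\<omega>. indicator minus_event \<omega> * (\<delta> * n_minus (fst \<omega>) / (n_minus (fst \<omega>) + 1)))"
      by (rule integrable_minus_ratio)
    show "integrable P (\<lambda>\<omega>. minus_weight (fst \<omega>) (snd \<omega>) * low_rank_count (fst \<omega>) (snd \<omega>))"
      using low_rank_count_bounds n_minus_nonneg
      by (intro integrable_bounded_by_1) (auto simp: minus_weight_def divide_le_eq_1 n_minus_plus_1_pos)
    fix \<omega> assume "\<omega> \<in> space P"
    then show "indicator minus_event \<omega> * (\<delta> * n_minus (fst \<omega>) / (n_minus (fst \<omega>) + 1))
        \<le> minus_weight (fst \<omega>) (snd \<omega>) * low_rank_count (fst \<omega>) (snd \<omega>)"
      using low_rank_count_ge[of "snd \<omega>" "fst \<omega>"] n_minus_nonneg[of "fst \<omega>"]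
      by (auto simp: minus_event_def minus_weight_def indicator_def divide_right_mono)
  qed
  then show ?thesis
    by (simp add: integral_low_rank_count)
qed

lemma plus_accept_bound:
  "(LINT \<omega>:plus_event|P. 1 - psi (ecdf g (Splus F M l (fst \<omega>)) (fst \<omega>)
        (pseudo_inv (ecdf g (Sminus F M l (fst \<omega>)) (fst \<omega>)) \<delta>)) (card (Splus F M l (fst \<omega>))))
     \<le> measure P (plus_event - reject_event)"
  (is "(LINT \<omega>:plus_event|P. ?bound \<omega>) \<le> _")
proof (cases "set_integrable P plus_event ?bound")
  case True
  have rate_integrable: "set_integrable P plus_event (\<lambda>\<omega>. 1 - plus_reject_rate (fst \<omega>))"
    "integrable P (\<lambda>\<omega>. indicator plus_event \<omega> * plus_reject_rate (fst \<omega>))"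
    using plus_reject_rate_bounds unfolding set_integrable_def
    by (auto intro!: integrable_bounded_by_1 simp: indicator_def)
  have "(LINT \<omega>:plus_event|P. ?bound \<omega>) \<le> (LINT \<omega>:plus_event|P. 1 - plus_reject_rate (fst \<omega>))"
    using True rate_integrable(1)
  proof (rule set_integral_mono)
    fix \<omega> assume "\<omega> \<in> plus_event"
    then show "?bound \<omega> \<le> 1 - plus_reject_rate (fst \<omega>)"
      using psi_ge[OF plus_reject_rate_bounds(2)]
      by (simp add: plus_event_def ecdf_Splus_threshold)
  qed
  also have "\<dots> = (\<integral>\<omega>. indicator plus_event \<omega> - indicator plus_event \<omega> * plus_reject_rate (fst \<omega>) \<partial>P)"
    unfolding set_lebesgue_integral_def by (simp add: algebra_simps)
  also have "\<dots> = measure P plus_event - measure P (plus_event \<inter> reject_event)"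
    using integrable_bounded_by_1[of "indicator plus_event"] rate_integrable(2)
    by (simp add: Bochner_Integration.integral_diff integral_plus_reject_rate sets.Int_space_eq2)
  also have "\<dots> = measure P (plus_event - reject_event)"
    by (simp add: P.finite_measure_Diff')
  finally show ?thesis .
next
  case False
  then show ?thesis
    by (simp add: set_lebesgue_integral_def set_integrable_def not_integrable_integral_eq)
qed

lemma minus_reject_bound:
  "(LINT \<omega>:minus_event|P. rho \<delta> (card (Sminus F M l (fst \<omega>)))) \<le> measure P (minus_event \<inter> reject_event)"
proof (cases "set_integrable P minus_event (\<lambda>\<omega>. rho \<delta> (card (Sminus F M l (fst \<omega>))))")
  case True
  have "set_integrable P minus_event (\<lambda>\<omega>. \<delta> * n_minus (fst \<omega>) / (n_minus (fst \<omega>) + 1))"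
    using integrable_minus_ratio by (simp add: set_integrable_def)
  moreover have "rho \<delta> (card (Sminus F M l S)) \<le> \<delta> * n_minus S / (n_minus S + 1)" for S
    using rho_le[of \<delta> "card (Sminus F M l S)"] \<delta> by (simp add: card_Sminus)
  ultimately have "(LINT \<omega>:minus_event|P. rho \<delta> (card (Sminus F M l (fst \<omega>))))
      \<le> (LINT \<omega>:minus_event|P. \<delta> * n_minus (fst \<omega>) / (n_minus (fst \<omega>) + 1))"
    using True by (intro set_integral_mono)
  also have "\<dots> \<le> measure P (minus_event \<inter> reject_event)"
    using integral_minus_reject_ge by (simp add: set_lebesgue_integral_def)
  finally show ?thesis .
next
  case False
  then show ?thesis
    by (simp add: set_lebesgue_integral_def set_integrable_def not_integrable_integral_eq)
qed

end

theorem theorem1: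
  fixes MU :: "'u measure" and PD :: "('u \<times> 'l) measure"
    and L :: "'l set" and lx :: 'l
    and F :: "'u \<Rightarrow> 'l" and \<Phi> :: "'u \<Rightarrow> real ^ 'd"
    and H :: "(real ^ 'd \<Rightarrow> real) set" and h :: "'l \<Rightarrow> real ^ 'd \<Rightarrow> real"
    and \<Delta> :: "'l \<Rightarrow> real" and M :: nat and l :: 'l
  defines "P \<equiv> (\<Pi>\<^sub>M i\<in>{..<M}. PD) \<Otimes>\<^sub>M PD"
  defines "E \<equiv> {S. \<forall>k\<in>L. Splus F M k S \<noteq> {} \<and> Sminus F M k S \<noteq> {}}"
  assumes finL: "finite L"
    and lx: "lx \<notin> L"
    and PD_prob: "prob_space PD"
    and PD_sets: "sets PD = sets (MU \<Otimes>\<^sub>M count_space L)"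
    and F_meas: "F \<in> MU \<rightarrow>\<^sub>M count_space L"
    and Phi_meas: "\<Phi> \<in> borel_measurable MU"
    and H_meas: "H \<subseteq> borel_measurable borel"
    and h_H: "\<And>k. k \<in> L \<Longrightarrow> h k \<in> H"
    and Delta: "\<And>k. k \<in> L \<Longrightarrow> \<Delta> k \<in> {0<..<1}"
    and E_pos: "measure (\<Pi>\<^sub>M i\<in>{..<M}. PD) E > 0"
    and l: "l \<in> L"
  shows
    "measure P {(S, (u, y)) \<in> space P. S \<in> E \<and> F u = l \<and> y = l
                 \<and> corrector lx F \<Phi> h \<Delta> M S (F u) (\<Phi> u) = l}
       / measure P {(S, (u, y)) \<in> space P. S \<in> E \<and> F u = l \<and> y = l}
     \<ge> (LINT \<omega>:{(S, (u, y)) \<in> space P. S \<in> E \<and> F u = l \<and> y = l}|P.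
            1 - psi (ecdf (\<lambda>u. h l (\<Phi> u)) (Splus F M l (fst \<omega>)) (fst \<omega>)
                          (thr F \<Phi> h \<Delta> M l (fst \<omega>)))
                    (card (Splus F M l (fst \<omega>))))
       / measure P {(S, (u, y)) \<in> space P. S \<in> E \<and> F u = l \<and> y = l}
   \<and> measure P {(S, (u, y)) \<in> space P. S \<in> E \<and> F u = l \<and> y \<noteq> l
                 \<and> corrector lx F \<Phi> h \<Delta> M S (F u) (\<Phi> u) = lx}
       / measure P {(S, (u, y)) \<in> space P. S \<in> E \<and> F u = l \<and> y \<noteq> l}
     \<ge> (LINT \<omega>:{(S, (u, y)) \<in> space P. S \<in> E \<and> F u = l \<and> y \<noteq> l}|P.
            rho (\<Delta> l) (card (Sminus F M l (fst \<omega>))))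
       / measure P {(S, (u, y)) \<in> space P. S \<in> E \<and> F u = l \<and> y \<noteq> l}"
proof -
  have g_meas: "(\<lambda>u. h l (\<Phi> u)) \<in> borel_measurable MU"
    using h_H[OF l] H_meas by (intro measurable_compose[OF Phi_meas]) auto
  interpret C: corrector_setting MU PD L F "\<lambda>u. h l (\<Phi> u)" M l "\<Delta> l"
    using Delta[OF l] by (intro corrector_setting.intro PD_prob PD_sets F_meas g_meas finL l) auto
  have rejected: "corrector lx F \<Phi> h \<Delta> M S l z = (if C.rejects S (h l z) then lx else l)"
    if "C.admissible S" for S z
    using C.le_threshold_iff_rejects[OF that] by (simp add: corrector_def thr_def)
  have "lx \<noteq> l"
    using lx l by auto
  moreover have "E = {S. C.admissible S}"
    by (simp add: E_def C.admissible_def)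
  ultimately have plus: "{(S, (u, y)) \<in> space P. S \<in> E \<and> F u = l \<and> y = l} = C.plus_event"
      "{(S, (u, y)) \<in> space P. S \<in> E \<and> F u = l \<and> y = l \<and> corrector lx F \<Phi> h \<Delta> M S (F u) (\<Phi> u) = l}
         = C.plus_event - C.reject_event"
    and minus: "{(S, (u, y)) \<in> space P. S \<in> E \<and> F u = l \<and> y \<noteq> l} = C.minus_event"
      "{(S, (u, y)) \<in> space P. S \<in> E \<and> F u = l \<and> y \<noteq> l \<and> corrector lx F \<Phi> h \<Delta> M S (F u) (\<Phi> u) = lx}
         = C.minus_event \<inter> C.reject_event"
    unfolding P_def C.plus_event_def C.minus_event_def C.reject_event_def C.is_plus_def C.is_minus_def
    by (auto simp: rejected cong: conj_cong split: if_splits)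
  show ?thesis
    unfolding plus minus unfolding P_def thr_def
    by (intro conjI divide_right_mono C.plus_accept_bound C.minus_reject_bound measure_nonneg)
qed

end
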